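(* Let $k_1>k_2>0$ be integers and $p=\frac{k_1}{k_1+k_2}$. Then, as $t\to\infty$ through the positive integers, $$\lim_{t\to\infty}\sum_{i=0}^\infty\binom{tk_1+tk_2+2i}{tk_1+i}p^{tk_1+i}(1-p)^{tk_2+i}=\frac{1/4}{p-\frac12}.$$ *)

theory Defs
  imports "HOL-Analysis.Analysis"
begin

end

theory Submission
  imports Defs "HOL-Real_Asymp.Real_Asymp"
begin

(* Write q = 1 - p, a = t k1 and b = t k2.  The i-th summand is the probability that the simple
   random walk with up-probability p is at height a - b after a + b + 2i steps, so the series is
   the expected number of visits to that height.  Conditioning on the first a + b steps, of which
   X ~ Bin(a + b, p) go up, and using that a walk started at height h visits h + 2e, resp. h - 2e,
   on average 1/(2p - 1), resp. (q/p)^(2e)/(2p - 1), times, the series equals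
     (P(X <= a) + sum_(k > a) P(X = k) (q/p)^(2(k - a))) / (2p - 1).
   Since p = a/(a + b), the binomial mean a is an integer and a mode.  The remaining sum is at most
   P(X = a)/(1 - (q/p)^2) = O(1/sqrt b), and P(X <= a) -> 1/2: consecutive ratios show
   P(X = a + k) ~ P(X = a - k) uniformly for k <= b^(3/5), and Chebyshev bounds the rest. *)

section \<open>Expected visits of a biased random walk\<close>

lemma central_binomial_Suc: "(2 * Suc j) choose Suc j = 2 * ((2*j+1) choose j)"
proof -
  have "(2 * Suc j) choose Suc j = ((2*j+1) choose j) + ((2*j+1) choose Suc j)"
    by simp
  moreover have "(2*j+1) choose Suc j = (2*j+1) choose j"
    using binomial_symmetric[of j "2*j+1"] by simp
  ultimately show ?thesis by simp
qed

lemma gbinomial_minus_half: "((-1/2::real) gchoose j) * (-4)^j = real ((2*j) choose j)"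
proof (induction j)
  case 0
  show ?case by simp
next
  case (Suc j)
  have "Suc j * (2*j+1 choose Suc j) = (2*j+1) * (2*j choose j)"
    using Suc_times_binomial[of j "2*j"] by simp
  moreover have "(2*j+1 choose Suc j) = (2*j+1 choose j)"
    using binomial_symmetric[of j "2*j+1"] by simp
  ultimately have "Suc j * ((2 * Suc j) choose Suc j) = 2 * ((2*j+1) * (2*j choose j))"
    unfolding central_binomial_Suc by (simp only: mult.left_commute[of "Suc j"])
  then have "Suc j * ((2 * Suc j) choose Suc j) = (4*j+2) * ((2*j) choose j)"
    by simp
  then have rec: "real (Suc j) * real ((2 * Suc j) choose Suc j) = (4 * real j + 2) * real ((2*j) choose j)"
    by (metis of_nat_mult of_nat_Suc of_nat_add of_nat_numeral)
  have "((-1/2::real) gchoose Suc j) * (-4)^Suc j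
        = ((-1/2::real) gchoose j) * (-4)^j * ((4 * real j + 2) / (real j + 1))"
    by (simp add: gbinomial_Suc_rec field_simps)
  also have "\<dots> = real ((2*j) choose j) * ((4 * real j + 2) / (real j + 1))"
    by (simp only: Suc.IH)
  also have "\<dots> = real ((2 * Suc j) choose Suc j)"
    using rec by (simp del: binomial_Suc_Suc add: field_simps)
  finally show ?case .
qed

lemma central_binomial_sums:
  fixes x :: real
  assumes "\<bar>x\<bar> < 1/4"
  shows "(\<lambda>j. real ((2*j) choose j) * x^j) sums (1 / sqrt (1 - 4*x))"
proof -
  have "(\<lambda>j. ((-1/2) gchoose j) * (-4*x)^j) sums ((1 + -4*x) powr (-1/2))"
    using assms by (intro gen_binomial_real) simp
  moreover have "((-1/2) gchoose j) * (-4*x)^j = real ((2*j) choose j) * x^j" for j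
  proof -
    have "((-1/2) gchoose j) * (-4*x)^j = (((-1/2) gchoose j) * (-4)^j) * x^j"
      by (simp only: power_mult_distrib mult.assoc)
    then show ?thesis by (simp only: gbinomial_minus_half)
  qed
  moreover have "(1 + -4*x) powr (-1/2) = 1 / sqrt (1 - 4*x)"
    using assms by (simp add: powr_minus_divide powr_half_sqrt)
  ultimately show ?thesis by simp
qed

(* walk_at p d j is the probability that the p-biased walk is at height d after 2j + d steps, so its
   sum over j is the expected number of visits to d.  For p > 1/2 this is 1/(2p - 1) for every
   d >= 0: the cases d = 0, 1 come from the central binomial series, and walk_at_suminf_rec
   propagates them. *)
definition walk_at :: "real \<Rightarrow> nat \<Rightarrow> nat \<Rightarrow> real" where
  "walk_at p d j = real ((2*j+d) choose j) * p^(j+d) * (1-p)^j"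

lemma summable_walk_at:
  assumes "0 \<le> p" "p \<le> 1" "p \<noteq> 1/2"
  shows "summable (walk_at p d)"
proof (rule summable_comparison_test')
  have "4*p*(1-p) < 1"
  proof -
    have "0 < (2*p-1)^2" using assms by simp
    then show ?thesis by (simp add: power2_eq_square algebra_simps)
  qed
  then show "summable (\<lambda>j. (2*p)^d * (4*p*(1-p))^j)"
    using assms by (intro summable_mult summable_geometric) simp
next
  fix j
  have "real ((2*j+d) choose j) \<le> 2^(2*j+d)"
    using binomial_le_pow2[of "2*j+d" j] by (metis of_nat_le_iff of_nat_numeral of_nat_power)
  then have "real ((2*j+d) choose j) * (p^(j+d) * (1-p)^j) \<le> 2^(2*j+d) * (p^(j+d) * (1-p)^j)"
    using assms by (intro mult_right_mono) auto
  also have "\<dots> = (2*p)^d * (4*p*(1-p))^j"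
    by (simp add: power_add power_mult_distrib power_mult)
  finally show "norm (walk_at p d j) \<le> (2*p)^d * (4*p*(1-p))^j"
    using assms by (simp add: walk_at_def mult.assoc)
qed

lemma walk_at_0_sums:
  assumes "1/2 < p" "p < 1"
  shows "walk_at p 0 sums (1/(2*p-1))"
proof -
  have square: "1 - 4*(p*(1-p)) = (2*p-1)^2"
    by (simp add: power2_eq_square algebra_simps)
  moreover have "0 < (2*p-1)^2"
    using assms by simp
  ultimately have "p*(1-p) < 1/4"
    by linarith
  moreover have "0 < p*(1-p)"
    using assms by simp
  ultimately have "\<bar>p*(1-p)\<bar> < 1/4"
    by simp
  moreover have "sqrt (1 - 4*(p*(1-p))) = 2*p-1"
    using assms by (simp add: square)
  moreover have "walk_at p 0 = (\<lambda>j. real ((2*j) choose j) * (p*(1-p))^j)"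
    by (simp add: fun_eq_iff walk_at_def power_mult_distrib)
  ultimately show ?thesis
    using central_binomial_sums[of "p*(1-p)"] by simp
qed

lemma walk_at_1_sums:
  assumes "1/2 < p" "p < 1"
  shows "walk_at p 1 sums (1/(2*p-1))"
proof -
  have "walk_at p 0 (Suc j) = 2*(1-p) * walk_at p 1 j" for j
    unfolding walk_at_def add_0_right central_binomial_Suc by (simp add: algebra_simps)
  moreover have "(\<lambda>j. walk_at p 0 (Suc j)) sums (1/(2*p-1) - 1)"
    using walk_at_0_sums[OF assms] sums_Suc_iff[of "walk_at p 0"] by (simp add: walk_at_def)
  ultimately have "(\<lambda>j. 2*(1-p) * walk_at p 1 j) sums (1/(2*p-1) - 1)"
    by simp
  then have "(\<lambda>j. walk_at p 1 j) sums ((1/(2*p-1) - 1) / (2*(1-p)))"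
    using assms by (simp add: sums_mult_D)
  moreover have "1/(2*p-1) - 1 = 2*(1-p) * (1/(2*p-1))"
    using assms by (simp add: field_simps)
  then have "(1/(2*p-1) - 1) / (2*(1-p)) = 1/(2*p-1)"
    using assms by simp
  ultimately show ?thesis by simp
qed

lemma walk_at_Suc_Suc:
  "walk_at p (Suc d) (Suc j) = p * walk_at p d (Suc j) + (1-p) * walk_at p (d+2) j"
proof -
  have "(2 * Suc j + Suc d) choose Suc j = ((2*j+(d+2)) choose j) + ((2 * Suc j + d) choose Suc j)"
    by simp
  then show ?thesis by (simp add: walk_at_def algebra_simps)
qed

lemma walk_at_suminf_rec:
  assumes "1/2 < p" "p < 1"
  shows "suminf (walk_at p (Suc d)) = p * suminf (walk_at p d) + (1-p) * suminf (walk_at p (d+2))"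
proof -
  have summable: "summable (walk_at p e)" for e
    using assms by (intro summable_walk_at) auto
  have "(\<lambda>j. p * walk_at p d (Suc j) + (1-p) * walk_at p (d+2) j) sums
          (p * (suminf (walk_at p d) - walk_at p d 0) + (1-p) * suminf (walk_at p (d+2)))"
    using summable[of d] summable[of "d+2"]
    by (intro sums_add sums_mult) (auto simp: sums_Suc_iff summable_sums)
  then have "(\<lambda>j. walk_at p (Suc d) (Suc j)) sums
          (p * (suminf (walk_at p d) - walk_at p d 0) + (1-p) * suminf (walk_at p (d+2)))"
    by (simp only: walk_at_Suc_Suc)
  then have "walk_at p (Suc d) sums
          (p * (suminf (walk_at p d) - walk_at p d 0) + (1-p) * suminf (walk_at p (d+2)) + walk_at p (Suc d) 0)"
    by (simp only: sums_Suc_iff)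
  moreover have "walk_at p (Suc d) 0 = p * walk_at p d 0"
    by (simp add: walk_at_def)
  ultimately show ?thesis
    by (simp add: sums_iff algebra_simps)
qed

lemma walk_at_sums:
  assumes "1/2 < p" "p < 1"
  shows "walk_at p d sums (1/(2*p-1))"
proof -
  have "suminf (walk_at p d) = 1/(2*p-1)"
  proof (induction d rule: less_induct)
    case (less d)
    consider "d = 0" | "d = 1" | e where "d = Suc (Suc e)"
      by (metis One_nat_def not0_implies_Suc)
    then show ?case
    proof cases
      case 3
      then have "suminf (walk_at p e) = 1/(2*p-1)" "suminf (walk_at p (Suc e)) = 1/(2*p-1)"
        using less.IH by auto
      then have "1/(2*p-1) = p * (1/(2*p-1)) + (1-p) * suminf (walk_at p (e+2))"
        using walk_at_suminf_rec[OF assms, of e] by simp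
      moreover have "(1-p) * S = (1-p) * v" if "v = p * v + (1-p) * S" for S v :: real
        using that by (simp add: algebra_simps)
      ultimately have "(1-p) * suminf (walk_at p (e+2)) = (1-p) * (1/(2*p-1))"
        by blast
      then show ?thesis
        using \<open>d = Suc (Suc e)\<close> assms by (simp only: mult_cancel_left) simp
    qed (use walk_at_0_sums[OF assms] walk_at_1_sums[OF assms] in \<open>auto simp: sums_iff\<close>)
  qed
  then show ?thesis
    using assms by (simp add: sums_iff summable_walk_at)
qed

lemma walk_level_above_sums:
  assumes "1/2 < p" "p < 1"
  shows "(\<lambda>i. real ((2*i) choose (i+e)) * p^(i+e) * (1-p)^(i-e)) sums (1/(2*p-1))"
proof -
  have "real ((2*(j+e)) choose (j+e+e)) * p^(j+e+e) * (1-p)^(j+e-e) = walk_at p (2*e) j" for j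
  proof -
    have "(2*j+2*e) choose j = (2*j+2*e) choose (j+2*e)"
      using binomial_symmetric[of j "2*j+2*e"] by simp
    moreover have "2*(j+e) = 2*j+2*e" "j+e+e = j+2*e" "j+e-e = j"
      by simp_all
    ultimately show ?thesis
      unfolding walk_at_def by (simp only:)
  qed
  then have "(\<lambda>j. real ((2*(j+e)) choose (j+e+e)) * p^(j+e+e) * (1-p)^(j+e-e)) sums (1/(2*p-1))"
    using walk_at_sums[OF assms] by simp
  then show ?thesis
    by (subst sums_zero_iff_shift[of e, symmetric]) auto
qed

lemma walk_level_below_sums:
  assumes "1/2 < p" "p < 1"
  shows "(\<lambda>i. real ((2*i) choose (i+e)) * p^(i-e) * (1-p)^(i+e)) sums (((1-p)/p)^(2*e) / (2*p-1))"
proof -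
  have shift: "real ((2*i) choose (i+e)) * p^(i-e) * (1-p)^(i+e)
        = ((1-p)/p)^(2*e) * (real ((2*i) choose (i+e)) * p^(i+e) * (1-p)^(i-e))" for i
  proof (cases "e \<le> i")
    case True
    then obtain j where "i = j + e" using le_Suc_ex by (metis add.commute)
    then have "p^(i-e) = p^j" "(1-p)^(i+e) = (1-p)^j * (1-p)^(2*e)"
      "p^(i+e) = p^j * p^(2*e)" "(1-p)^(i-e) = (1-p)^j"
      by (simp_all add: power_add mult_2)
    then show ?thesis
      using assms by (simp add: power_divide field_simps)
  qed simp
  show ?thesis
    unfolding shift using sums_mult[OF walk_level_above_sums[OF assms, of e], of "((1-p)/p)^(2*e)"] by simp
qed

section \<open>Conditioning on the first steps\<close>

lemma vandermonde_walk:
  "(n + 2*i) choose (a+i) = (\<Sum>k\<le>n. (n choose k) * ((2*i) choose (i + (if k \<le> a then a-k else k-a))))"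
proof -
  define g where "g k = (n choose k) * ((2*i) choose (i + (if k \<le> a then a-k else k-a)))" for k
  have "(n + 2*i) choose (a+i) = (\<Sum>k\<le>a+i. (n choose k) * ((2*i) choose (a+i-k)))"
    using vandermonde[of n "2*i" "a+i"] by simp
  also have "\<dots> = (\<Sum>k\<le>a+i. g k)"
  proof (rule sum.cong)
    fix k assume "k \<in> {..a+i}"
    moreover have "(2*i) choose (a+i-k) = (2*i) choose (i+(k-a))" if "a < k" "k \<le> a+i"
      using that binomial_symmetric[of "a+i-k" "2*i"] by (simp add: add_diff_eq)
    moreover have "a+i-k = i+(a-k)" if "k \<le> a"
      using that by simp
    ultimately show "(n choose k) * ((2*i) choose (a+i-k)) = g k"
      unfolding g_def by (auto simp del: diff_add_assoc add_diff_assoc)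
  qed simp
  also have "\<dots> = (\<Sum>k\<le>n+(a+i). g k)"
    by (intro sum.mono_neutral_left) (auto simp: g_def)
  also have "\<dots> = (\<Sum>k\<le>n. g k)"
    by (intro sum.mono_neutral_right) (auto simp: g_def)
  finally show ?thesis
    by (simp only: g_def)
qed

(* If k of the first a + b steps go up, the remaining 2i steps must bring the walk up by
   2(a - k), or down by 2(k - a). *)
lemma walk_sum_split:
  assumes "1/2 < p" "p < 1"
  shows "(\<lambda>i. real ((a+b+2*i) choose (a+i)) * p^(a+i) * (1-p)^(b+i)) sums
     (((\<Sum>k\<le>a. Bernstein (a+b) k p)
       + (\<Sum>k\<in>{a<..a+b}. Bernstein (a+b) k p * ((1-p)/p)^(2*(k-a)))) / (2*p-1))"
proof -
  define n where "n = a+b"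
  define up where "up e i = real ((2*i) choose (i+e)) * p^(i+e) * (1-p)^(i-e)" for e i
  define down where "down e i = real ((2*i) choose (i+e)) * p^(i-e) * (1-p)^(i+e)" for e i
  have up: "real ((n choose k) * ((2*i) choose (i+(a-k)))) * p^(a+i) * (1-p)^(b+i)
            = Bernstein n k p * up (a-k) i" if "k \<le> a" for k i
  proof (cases "a-k \<le> i")
    case True
    then have "a+i = k + (i+(a-k))" "b+i = (n-k) + (i-(a-k))"
      using that by (simp_all add: n_def)
    then show ?thesis
      unfolding Bernstein_def up_def by (simp only: power_add of_nat_mult ac_simps)
  next
    case False
    then have "(2*i) choose (i+(a-k)) = 0"
      by (intro binomial_eq_0) linarith
    then show ?thesis
      by (simp only: up_def)
  qed
  have down: "real ((n choose k) * ((2*i) choose (i+(k-a)))) * p^(a+i) * (1-p)^(b+i)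
            = Bernstein n k p * down (k-a) i" if "a < k" "k \<le> n" for k i
  proof (cases "k-a \<le> i")
    case True
    then have "a+i = k + (i-(k-a))" "b+i = (n-k) + (i+(k-a))"
      using that by (simp_all add: n_def)
    then show ?thesis
      unfolding Bernstein_def down_def by (simp only: power_add of_nat_mult ac_simps)
  next
    case False
    then have "(2*i) choose (i+(k-a)) = 0"
      by (intro binomial_eq_0) linarith
    then show ?thesis
      by (simp only: down_def)
  qed
  have "real ((a+b+2*i) choose (a+i)) * p^(a+i) * (1-p)^(b+i)
        = (\<Sum>k\<le>n. real ((n choose k) * ((2*i) choose (i + (if k \<le> a then a-k else k-a))))
                    * p^(a+i) * (1-p)^(b+i))" for i
    unfolding n_def vandermonde_walk[of "a+b" i a] of_nat_sum sum_distrib_right ..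
  also have "\<dots> i = (\<Sum>k\<le>a. Bernstein n k p * up (a-k) i) + (\<Sum>k\<in>{a<..n}. Bernstein n k p * down (k-a) i)"
    for i
  proof -
    have "{..n} = {..a} \<union> {a<..n}" "{..a} \<inter> {a<..n} = {}"
      by (auto simp: n_def)
    then show ?thesis
      using up down by (simp add: sum.union_disjoint)
  qed
  finally have split: "real ((a+b+2*i) choose (a+i)) * p^(a+i) * (1-p)^(b+i)
      = (\<Sum>k\<le>a. Bernstein n k p * up (a-k) i) + (\<Sum>k\<in>{a<..n}. Bernstein n k p * down (k-a) i)" for i .
  have "(\<lambda>i. (\<Sum>k\<le>a. Bernstein n k p * up (a-k) i) + (\<Sum>k\<in>{a<..n}. Bernstein n k p * down (k-a) i))
        sums ((\<Sum>k\<le>a. Bernstein n k p * (1/(2*p-1)))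
              + (\<Sum>k\<in>{a<..n}. Bernstein n k p * (((1-p)/p)^(2*(k-a)) / (2*p-1))))"
    unfolding up_def down_def
    by (intro sums_add sums_sum sums_mult walk_level_above_sums walk_level_below_sums assms)
  then show ?thesis
    unfolding split n_def by (simp add: sum_divide_distrib add_divide_distrib)
qed

section \<open>The binomial distribution at an integer mean\<close>

lemma Bernstein_Suc:
  "Bernstein n (Suc k) x * real (Suc k) * (1-x) = Bernstein n k x * real (n-k) * x"
proof (cases "k < n")
  case True
  have "(n choose Suc k) * Suc k = (n choose k) * (n-k)"
    using binomial_absorption[of k n] binomial_absorb_comp[of n k] by (simp add: mult_ac)
  then have "real (n choose Suc k) * real (Suc k) = real (n choose k) * real (n-k)"
    by (metis of_nat_mult)
  moreover have "n - k = Suc (n - Suc k)"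
    using True by simp
  ultimately show ?thesis
    unfolding Bernstein_def by (simp add: mult_ac)
next
  case False
  then show ?thesis
    by (simp add: Bernstein_def)
qed

lemma sum_Bernstein_variance:
  "(\<Sum>k\<le>n. (real k - real n * x)^2 * Bernstein n k x) = real n * x * (1-x)"
proof -
  have "(\<Sum>k\<le>n. (real k - real n * x)^2 * Bernstein n k x)
        = (\<Sum>k\<le>n. real k * (real k - 1) * Bernstein n k x
                  + (1 - 2 * real n * x) * (real k * Bernstein n k x) + (real n * x)^2 * Bernstein n k x)"
    by (rule sum.cong) (simp_all add: power2_eq_square algebra_simps)
  also have "\<dots> = real n * (real n - 1) * x^2 + (1 - 2 * real n * x) * (real n * x) + (real n * x)^2"
    by (simp add: sum.distrib flip: sum_distrib_left)
  also have "\<dots> = real n * x * (1-x)"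
    by (simp add: power2_eq_square algebra_simps)
  finally show ?thesis .
qed

lemma Bernstein_tail_le:
  assumes "0 \<le> x" "x \<le> 1" "0 < K"
  shows "(\<Sum>k | k \<le> n \<and> K < \<bar>real k - real n * x\<bar>. Bernstein n k x) \<le> real n * x * (1-x) / K^2"
proof -
  have "(\<Sum>k | k \<le> n \<and> K < \<bar>real k - real n * x\<bar>. Bernstein n k x)
        \<le> (\<Sum>k | k \<le> n \<and> K < \<bar>real k - real n * x\<bar>. (real k - real n * x)^2 / K^2 * Bernstein n k x)"
  proof (rule sum_mono)
    fix k assume "k \<in> {k. k \<le> n \<and> K < \<bar>real k - real n * x\<bar>}"
    then have "K^2 \<le> (real k - real n * x)^2"
      using assms by (metis abs_le_square_iff abs_of_pos less_imp_le mem_Collect_eq)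
    then have "1 \<le> (real k - real n * x)^2 / K^2"
      using assms by simp
    from mult_right_mono[OF this Bernstein_nonneg[OF assms(1,2)]]
    show "Bernstein n k x \<le> (real k - real n * x)^2 / K^2 * Bernstein n k x"
      by simp
  qed
  also have "\<dots> \<le> (\<Sum>k\<le>n. (real k - real n * x)^2 / K^2 * Bernstein n k x)"
    using Bernstein_nonneg[OF assms(1,2)] by (intro sum_mono2) auto
  also have "\<dots> = real n * x * (1-x) / K^2"
    by (simp add: sum_divide_distrib[symmetric] sum_Bernstein_variance)
  finally show ?thesis .
qed

lemma ratio_lower_bound:
  fixes f g :: "nat \<Rightarrow> real"
  assumes "0 \<le> v" "g 0 \<le> f 0"
    and f_nonneg: "\<And>k. k \<le> K \<Longrightarrow> 0 \<le> f k" and g_pos: "\<And>k. k \<le> K \<Longrightarrow> 0 < g k"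
    and step: "\<And>k. k < K \<Longrightarrow> (1 - v) * f k * g (Suc k) \<le> f (Suc k) * g k"
  shows "k \<le> K \<Longrightarrow> (1 - real k * v) * g k \<le> f k"
proof (induction k)
  case 0
  then show ?case using assms(2) by simp
next
  case (Suc k)
  show ?case
  proof (cases "1 - real (Suc k) * v \<le> 0")
    case True
    then show ?thesis
      using f_nonneg[OF Suc.prems] g_pos[OF Suc.prems] by (meson mult_nonpos_nonneg less_imp_le order_trans)
  next
    case False
    have g: "0 < g k" "0 < g (Suc k)"
      using g_pos Suc.prems by auto
    have "v \<le> real (Suc k) * v" "real k * v \<le> real (Suc k) * v"
      using \<open>0 \<le> v\<close> by (simp_all add: algebra_simps)
    then have "0 \<le> 1 - v"
      using False by linarith
    have "(1 - real (Suc k) * v) * g (Suc k) * g k \<le> ((1 - v) * (1 - real k * v)) * g (Suc k) * g k"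
      using \<open>0 \<le> v\<close> g by (intro mult_right_mono) (auto simp: algebra_simps)
    also have "\<dots> \<le> ((1 - v) * g (Suc k)) * f k"
      using mult_left_mono[OF Suc.IH[OF Suc_leD[OF Suc.prems]], of "(1 - v) * g (Suc k)"] g \<open>0 \<le> 1 - v\<close>
      by (simp add: mult_ac)
    also have "\<dots> = (1 - v) * f k * g (Suc k)"
      by (simp add: mult_ac)
    also have "\<dots> \<le> f (Suc k) * g k"
      using step Suc.prems by simp
    finally show ?thesis
      using g by simp
  qed
qed

lemma cross_ratio_bound:
  fixes b c d x v :: real
  assumes "0 < b" "b \<le> c" "b \<le> d" "0 \<le> x" "x < b^2" "x / b^2 + 1/b \<le> v"
  shows "(1 - v) * ((d^2 + d - x) * c^2) \<le> (c^2 + c - x) * d^2"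
proof -
  have "b^2 \<le> c^2" "b^2 \<le> d^2"
    using assms by (simp_all add: power_mono)
  have lower: "(1 - x / b^2) * (c^2 * d^2) \<le> (c^2 + c - x) * d^2"
  proof -
    have "x * c^2 / b^2 \<ge> x"
      using assms \<open>b^2 \<le> c^2\<close> by (simp add: le_divide_eq mult_left_mono)
    then have "(1 - x / b^2) * c^2 \<le> c^2 + c - x"
      using assms by (simp add: algebra_simps)
    then show ?thesis
      by (simp add: mult_right_mono mult.assoc[symmetric])
  qed
  show ?thesis
  proof (cases "1 - v \<le> 0")
    case True
    have "0 \<le> d^2 + d - x"
      using assms \<open>b^2 \<le> d^2\<close> by linarith
    then have "0 \<le> (d^2 + d - x) * c^2"
      by simp
    moreover have "0 \<le> (1 - x / b^2) * (c^2 * d^2)"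
      using assms by (simp add: field_simps)
    ultimately show ?thesis
      using True lower by (meson mult_nonpos_nonneg order_trans)
  next
    case False
    have "d \<le> d^2 / b"
      using assms by (simp add: field_simps power2_eq_square mult_right_mono)
    then have d: "d^2 + d - x \<le> (1 + 1/b) * d^2"
      using assms by (simp add: algebra_simps)
    have v: "(1 - v) * (1 + 1/b) \<le> 1 - x / b^2"
    proof -
      have "(1 - v) * (1 + 1/b) \<le> (1 - x / b^2 - 1/b) * (1 + 1/b)"
        using assms by (intro mult_right_mono) auto
      also have "\<dots> = 1 - x / b^2 - (x / b^2 + 1/b) / b"
        using assms by (simp add: field_simps power2_eq_square)
      also have "\<dots> \<le> 1 - x / b^2"
        using assms by simp
      finally show ?thesis .
    qed
    have "(1 - v) * ((d^2 + d - x) * c^2) \<le> (1 - v) * (((1 + 1/b) * d^2) * c^2)"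
      using d False by (intro mult_left_mono mult_right_mono) auto
    also have "\<dots> = ((1 - v) * (1 + 1/b)) * (c^2 * d^2)"
      by (simp only: mult_ac)
    also have "\<dots> \<le> (1 - x / b^2) * (c^2 * d^2)"
      using v by (intro mult_right_mono) auto
    finally have "(1 - v) * ((d^2 + d - x) * c^2) \<le> (1 - x / b^2) * (c^2 * d^2)" .
    then show ?thesis
      using lower by linarith
  qed
qed

lemma mode_ratio_bound:
  fixes a b k K :: real
  assumes "0 < b" "b \<le> a" "0 \<le> k" "k + 1 \<le> K"
  shows "(1 - 2*K/b) * ((a+k+1) * b) \<le> (b-k) * a"
proof -
  have "(b-k) * a - (1 - 2*K/b) * ((a+k+1) * b)
        = (2*K*a - k*a - (k+1)*a) + ((k+1)*a - (k+1)*b) + 2*K*(k+1)"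
    using assms by (simp add: field_simps)
  moreover have "(k+1) * b \<le> (k+1) * a" "k * a \<le> K * a" "(k+1) * a \<le> K * a" "0 \<le> K*(k+1)"
    using assms by (simp_all add: mult_right_mono mult_left_mono)
  ultimately show ?thesis
    by linarith
qed

(* Bernstein (a + b) j x is the Bin(a + b, x) probability of j; at x = a/(a + b) the mean is a. *)
locale binomial_at_mean =
  fixes a b :: nat
  assumes b_pos: "0 < b" and b_le_a: "b \<le> a"
begin

abbreviation B :: "nat \<Rightarrow> real" where
  "B j \<equiv> Bernstein (a+b) j (real a / (real a + real b))"

lemma B_nonneg: "0 \<le> B j"
  by (intro Bernstein_nonneg) (auto simp: divide_le_eq_1)

lemma B_pos: "j \<le> a+b \<Longrightarrow> 0 < B j"
  using b_pos b_le_a by (intro Bernstein_pos) auto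

lemma sum_B_le_1: "S \<subseteq> {..a+b} \<Longrightarrow> (\<Sum>j\<in>S. B j) \<le> 1"
  using sum_mono2[of "{..a+b}" S B] B_nonneg by (simp add: sum_Bernstein)

lemma B_Suc: "B (Suc j) * real (Suc j) * real b = B j * real (a+b-j) * real a"
proof -
  define x where "x = real a / (real a + real b)"
  have a: "x * (real a + real b) = real a"
    using b_pos by (simp add: x_def)
  then have b: "(1 - x) * (real a + real b) = real b"
    by (simp add: left_diff_distrib)
  have "B (Suc j) * real (Suc j) * real b = (B (Suc j) * real (Suc j) * (1-x)) * (real a + real b)"
    using b by (simp only: mult.assoc)
  also have "\<dots> = (B j * real (a+b-j) * x) * (real a + real b)"
    unfolding x_def Bernstein_Suc ..
  also have "\<dots> = B j * real (a+b-j) * real a"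
    using a by (simp only: mult.assoc)
  finally show ?thesis .
qed

lemma B_Suc_above_mean:
  "k \<le> b \<Longrightarrow> B (a + Suc k) * ((real a + real k + 1) * real b) = B (a+k) * ((real b - real k) * real a)"
  using B_Suc[of "a+k"] by (simp add: algebra_simps of_nat_diff)

lemma B_Suc_below_mean:
  "k < a \<Longrightarrow> B (a - Suc k) * ((real b + real k + 1) * real a) = B (a-k) * ((real a - real k) * real b)"
  using B_Suc[of "a - Suc k"] by (simp add: Suc_diff_Suc of_nat_diff algebra_simps)

lemma B_above_mean_le: "B (a+k) \<le> B a"
proof (induction k)
  case (Suc k)
  have "B (a + Suc k) \<le> B (a+k)"
  proof (cases "k \<le> b")
    case True
    have "(real b - real k) * real a \<le> (real a + real k + 1) * real b"
      using b_le_a by (simp add: algebra_simps mult_mono)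
    then have "B (a + Suc k) * ((real a + real k + 1) * real b) \<le> B (a+k) * ((real a + real k + 1) * real b)"
      unfolding B_Suc_above_mean[OF True] using B_nonneg[of "a+k"] by (rule mult_left_mono)
    moreover have "0 < (real a + real k + 1) * real b"
      using b_pos by simp
    ultimately show ?thesis
      by (rule mult_right_le_imp_le)
  next
    case False
    then have "B (a + Suc k) = 0"
      by (simp add: Bernstein_def binomial_eq_0)
    then show ?thesis
      using B_nonneg by simp
  qed
  with Suc show ?case
    by simp
qed simp

lemma B_near_mean_lower:
  assumes "K \<le> b" "k \<le> K"
  shows "(1 - real k * (2 * real K / real b)) * B a \<le> B (a+k)"
proof (rule ratio_lower_bound[where f = "\<lambda>k. B (a+k)" and g = "\<lambda>_. B a", OF _ _ _ _ _ \<open>k \<le> K\<close>])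
  fix k assume "k < K"
  have "(1 - 2 * real K / real b) * ((real a + real k + 1) * real b) \<le> (real b - real k) * real a"
    using \<open>k < K\<close> b_pos b_le_a by (intro mode_ratio_bound) auto
  from mult_right_mono[OF this B_nonneg[of "a+k"]]
  have "(1 - 2 * real K / real b) * B (a+k) * ((real a + real k + 1) * real b)
             \<le> B (a+k) * ((real b - real k) * real a)"
    by (simp only: mult_ac)
  also have "\<dots> = B (a + Suc k) * ((real a + real k + 1) * real b)"
    using \<open>k < K\<close> \<open>K \<le> b\<close> by (intro B_Suc_above_mean[symmetric]) simp
  finally have "(1 - 2 * real K / real b) * B (a+k) * ((real a + real k + 1) * real b)
             \<le> B (a + Suc k) * ((real a + real k + 1) * real b)" .
  then have "(1 - 2 * real K / real b) * B (a+k) \<le> B (a + Suc k)"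
    by (rule mult_right_le_imp_le) (simp add: b_pos)
  then show "(1 - 2 * real K / real b) * B (a+k) * B a \<le> B (a + Suc k) * B a"
    using B_nonneg[of a] by (intro mult_right_mono) auto
qed (auto simp del: of_nat_add intro: B_nonneg B_pos)

lemma B_at_mean_le: "B a \<le> 4 / sqrt (real b)"
proof -
  define K where "K = nat \<lfloor>sqrt (real b) / 2\<rfloor>"
  have K: "real K \<le> sqrt (real b) / 2" "sqrt (real b) / 2 < real K + 1"
    unfolding K_def by (simp_all add: of_nat_floor, linarith)
  have "(2 * real K)^2 \<le> (sqrt (real b))^2"
    using K(1) by (intro power_mono) auto
  then have K_sq: "4 * real K^2 \<le> real b"
    by (simp add: power_mult_distrib)
  have "real K \<le> real K^2"
    by (cases K) (auto simp: power2_eq_square)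
  then have "K \<le> b"
    using K_sq by linarith
  have half: "B a / 2 \<le> B (a+k)" if "k \<le> K" for k
  proof -
    have "real k * (2 * real K / real b) \<le> 2 * real K^2 / real b"
      using that by (simp add: power2_eq_square divide_right_mono mult_right_mono)
    also have "\<dots> \<le> 1/2"
      using K_sq b_pos by (simp add: field_simps)
    finally have "1/2 \<le> 1 - real k * (2 * real K / real b)"
      by simp
    from mult_right_mono[OF this B_nonneg[of a]]
    have "B a / 2 \<le> (1 - real k * (2 * real K / real b)) * B a"
      by simp
    also have "\<dots> \<le> B (a+k)"
      using \<open>K \<le> b\<close> that by (rule B_near_mean_lower)
    finally show ?thesis .
  qed
  have "(real K + 1) * (B a / 2) = (\<Sum>k\<le>K. B a / 2)"
    by simp
  also have "\<dots> \<le> (\<Sum>k\<le>K. B (a+k))"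
    using half by (intro sum_mono) auto
  also have "\<dots> = (\<Sum>j\<in>(+) a ` {..K}. B j)"
    by (simp add: sum.reindex)
  also have "\<dots> \<le> 1"
    using \<open>K \<le> b\<close> by (intro sum_B_le_1) auto
  finally have "B a \<le> 2 / (real K + 1)"
    by (simp add: field_simps)
  also have "\<dots> \<le> 2 / (sqrt (real b) / 2)"
    using K b_pos by (intro divide_left_mono) auto
  also have "\<dots> = 4 / sqrt (real b)"
    by simp
  finally show ?thesis .
qed

(* With x = k(k + 1), the ratio B(a+k+1) B(a-k) / (B(a+k) B(a-k-1)) equals
   (1 + 1/b - x/b^2) / (1 + 1/a - x/a^2), which is close to 1 when k is small compared to b. *)
lemma B_cross:
  assumes "k < b"
  shows "B (a + Suc k) * B (a-k) * ((real a^2 + real a - real k * (real k + 1)) * real b^2)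
       = B (a+k) * B (a - Suc k) * ((real b^2 + real b - real k * (real k + 1)) * real a^2)"
proof -
  have "k < a"
    using assms b_le_a by simp
  have "B (a + Suc k) * B (a-k) * ((real a^2 + real a - real k * (real k + 1)) * real b^2)
        = (B (a + Suc k) * ((real a + real k + 1) * real b)) * (B (a-k) * ((real a - real k) * real b))"
    by (simp add: power2_eq_square algebra_simps)
  also have "\<dots> = (B (a+k) * ((real b - real k) * real a)) * (B (a - Suc k) * ((real b + real k + 1) * real a))"
    using assms \<open>k < a\<close> by (simp only: B_Suc_above_mean B_Suc_below_mean less_imp_le)
  also have "\<dots> = B (a+k) * B (a - Suc k) * ((real b^2 + real b - real k * (real k + 1)) * real a^2)"
    by (simp add: power2_eq_square algebra_simps)
  finally show ?thesis .
qed

lemma B_cross_bounds: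
  assumes "k < K" "K \<le> b"
  defines "v \<equiv> real K^2 / real b^2 + 1 / real b"
  shows "(1 - v) * (B (a+k) * B (a - Suc k)) \<le> B (a + Suc k) * B (a-k)"
    and "(1 - v) * (B (a + Suc k) * B (a-k)) \<le> B (a+k) * B (a - Suc k)"
proof -
  define x where "x = real k * (real k + 1)"
  define P where "P = B (a+k) * B (a - Suc k)"
  define Q where "Q = B (a + Suc k) * B (a-k)"
  define X where "X = (real b^2 + real b - x) * real a^2"
  define Y where "Y = (real a^2 + real a - x) * real b^2"
  have cross: "Q * Y = P * X"
    unfolding P_def Q_def X_def Y_def x_def using assms by (intro B_cross) simp
  have "x < (real k + 1)^2" "(real k + 1)^2 \<le> real K^2" "real K^2 \<le> real b^2"
    using assms by (simp_all add: x_def power2_eq_square mult_mono)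
  then have "x < real b^2" "x \<le> real K^2"
    by linarith+
  moreover have "0 \<le> x"
    by (simp add: x_def)
  moreover from \<open>x \<le> real K^2\<close> have "x / real b^2 + 1 / real b \<le> v"
    unfolding v_def by (simp add: divide_right_mono)
  ultimately have x: "0 \<le> x" "x < real b^2" "x / real b^2 + 1 / real b \<le> v"
    by simp_all
  have "(1 - v) * Y \<le> X" "(1 - v) * X \<le> Y"
    unfolding X_def Y_def using x b_pos b_le_a by (intro cross_ratio_bound; simp)+
  moreover have "0 \<le> P" "0 \<le> Q"
    unfolding P_def Q_def by (intro mult_nonneg_nonneg B_nonneg)+
  moreover have "real b^2 \<le> real a^2"
    using b_le_a by (simp add: power_mono)
  then have "x < real b^2 + real b" "x < real a^2 + real a"
    using x(2) by linarith+
  then have "0 < X" "0 < Y"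
    unfolding X_def Y_def using b_pos b_le_a by simp_all
  ultimately have "((1 - v) * P) * Y \<le> Q * Y" "((1 - v) * Q) * X \<le> P * X"
    using cross by (metis mult_left_mono mult.assoc mult.commute)+
  then show "(1 - v) * (B (a+k) * B (a - Suc k)) \<le> B (a + Suc k) * B (a-k)"
    and "(1 - v) * (B (a + Suc k) * B (a-k)) \<le> B (a+k) * B (a - Suc k)"
    using \<open>0 < X\<close> \<open>0 < Y\<close> unfolding P_def Q_def by (auto elim: mult_right_le_imp_le)
qed

lemma B_near_mean_symmetric:
  assumes "K \<le> b" "k \<le> K"
  defines "v \<equiv> real K^2 / real b^2 + 1 / real b"
  shows "(1 - real k * v) * B (a-k) \<le> B (a+k)"
    and "(1 - real k * v) * B (a+k) \<le> B (a-k)"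
proof -
  have pos: "0 < B (a-j)" "0 < B (a+j)" if "j \<le> K" for j
    using that assms b_le_a by (auto intro!: B_pos)
  show "(1 - real k * v) * B (a-k) \<le> B (a+k)"
    by (rule ratio_lower_bound[where f = "\<lambda>k. B (a+k)" and g = "\<lambda>k. B (a-k)", OF _ _ _ _ _ \<open>k \<le> K\<close>])
       (use pos B_cross_bounds(1)[OF _ \<open>K \<le> b\<close>] in \<open>auto simp: v_def B_nonneg mult_ac\<close>)
  show "(1 - real k * v) * B (a+k) \<le> B (a-k)"
    by (rule ratio_lower_bound[where f = "\<lambda>k. B (a-k)" and g = "\<lambda>k. B (a+k)", OF _ _ _ _ _ \<open>k \<le> K\<close>])
       (use pos B_cross_bounds(2)[OF _ \<open>K \<le> b\<close>] in \<open>auto simp: v_def B_nonneg mult_ac\<close>)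
qed

lemma near_mean_sums_close:
  assumes "K \<le> b"
  shows "\<bar>(\<Sum>j\<in>{a-K..<a}. B j) - (\<Sum>j\<in>{a<..a+K}. B j)\<bar> \<le> real K * (real K^2 / real b^2 + 1 / real b)"
proof -
  define \<delta> where "\<delta> = real K * (real K^2 / real b^2 + 1 / real b)"
  define L where "L = (\<Sum>j\<in>{a-K..<a}. B j)"
  define U where "U = (\<Sum>j\<in>{a<..a+K}. B j)"
  have L: "L = (\<Sum>k\<in>{1..K}. B (a-k))"
    unfolding L_def using assms b_le_a
    by (intro sum.reindex_bij_witness[of _ "\<lambda>j. a - j" "\<lambda>k. a - k"]) auto
  have U: "U = (\<Sum>k\<in>{1..K}. B (a+k))"
    unfolding U_def by (rule sum.reindex_bij_witness[of _ "\<lambda>k. a + k" "\<lambda>j. j - a"]) auto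
  have "0 \<le> \<delta>"
    by (simp add: \<delta>_def)
  have weaken: "(1 - \<delta>) * y \<le> (1 - real k * (real K^2 / real b^2 + 1 / real b)) * y"
    if "k \<le> K" "0 \<le> y" for k y
    using that unfolding \<delta>_def by (intro mult_right_mono) (auto intro: mult_right_mono)
  have "(1 - \<delta>) * L \<le> U" "(1 - \<delta>) * U \<le> L"
    unfolding L U sum_distrib_left
    using order_trans[OF weaken B_near_mean_symmetric(1)[OF assms]]
          order_trans[OF weaken B_near_mean_symmetric(2)[OF assms]]
    by (auto intro!: sum_mono simp: B_nonneg)
  moreover have "L \<le> 1" "U \<le> 1"
    unfolding L_def U_def using assms by (auto intro!: sum_B_le_1)
  moreover have "0 \<le> L" "0 \<le> U"
    unfolding L_def U_def by (simp_all add: sum_nonneg B_nonneg)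
  ultimately have "\<bar>L - U\<bar> \<le> \<delta>"
    using \<open>0 \<le> \<delta>\<close> mult_left_le[of L \<delta>] mult_left_le[of U \<delta>] by (auto simp: algebra_simps)
  then show ?thesis
    by (simp add: L_def U_def \<delta>_def)
qed

lemma tail_sum_le:
  assumes "0 < K"
  shows "(\<Sum>j | j \<le> a+b \<and> real K < \<bar>real j - real a\<bar>. B j) \<le> real b / real K^2"
proof -
  define x where "x = real a / (real a + real b)"
  have x: "0 \<le> x" "x \<le> 1" and mean: "real (a+b) * x = real a" and "real (a+b) * (1-x) = real b"
    using b_pos by (simp_all add: x_def field_simps)
  have "(\<Sum>j | j \<le> a+b \<and> real K < \<bar>real j - real a\<bar>. B j) \<le> real a * (1-x) / real K^2"
    using Bernstein_tail_le[OF x, of "real K" "a+b"] assms unfolding mean by (simp add: x_def)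
  also have "\<dots> = x * real b / real K^2"
    using \<open>real (a+b) * (1-x) = real b\<close> unfolding mean[symmetric] by (simp add: mult_ac)
  also have "\<dots> \<le> real b / real K^2"
    using x by (intro divide_right_mono mult_left_le_one_le) auto
  finally show ?thesis .
qed

lemma cdf_at_mean_bound:
  assumes "1 \<le> K" "K \<le> b"
  shows "\<bar>2 * (\<Sum>j\<le>a. B j) - 1\<bar> \<le> real K * (real K^2 / real b^2 + 1 / real b) + real b / real K^2 + B a"
proof -
  define L where "L = (\<Sum>j\<in>{a-K..<a}. B j)"
  define U where "U = (\<Sum>j\<in>{a<..a+K}. B j)"
  define T1 where "T1 = (\<Sum>j<a-K. B j)"
  define T2 where "T2 = (\<Sum>j\<in>{a+K<..a+b}. B j)"
  have "K \<le> a"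
    using assms b_le_a by simp
  have "{..a} = {..<a-K} \<union> {a-K..<a} \<union> {a}"
    by auto
  then have below: "(\<Sum>j\<le>a. B j) = T1 + L + B a"
    unfolding T1_def L_def by (simp add: sum.union_disjoint ivl_disj_int)
  have "{a<..a+b} = {a<..a+K} \<union> {a+K<..a+b}"
    using assms by auto
  then have above: "(\<Sum>j\<in>{a<..a+b}. B j) = U + T2"
    unfolding U_def T2_def by (simp add: sum.union_disjoint ivl_disj_int)
  have "{..a+b} = {..a} \<union> {a<..a+b}"
    by auto
  then have total: "(\<Sum>j\<le>a. B j) + (\<Sum>j\<in>{a<..a+b}. B j) = 1"
    using sum_Bernstein[of "a+b"] by (simp add: sum.union_disjoint ivl_disj_int)
  have "T1 + T2 = (\<Sum>j\<in>{..<a-K} \<union> {a+K<..a+b}. B j)"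
    unfolding T1_def T2_def by (rule sum.union_disjoint[symmetric]) auto
  also have "\<dots> \<le> (\<Sum>j | j \<le> a+b \<and> real K < \<bar>real j - real a\<bar>. B j)"
    using \<open>K \<le> a\<close> by (intro sum_mono2) (auto simp: B_nonneg)
  also have "\<dots> \<le> real b / real K^2"
    using assms by (intro tail_sum_le) simp
  finally have tails: "T1 + T2 \<le> real b / real K^2" .
  have "0 \<le> T1" "0 \<le> T2"
    unfolding T1_def T2_def by (simp_all add: sum_nonneg B_nonneg)
  moreover have "\<bar>L - U\<bar> \<le> real K * (real K^2 / real b^2 + 1 / real b)"
    unfolding L_def U_def using assms by (intro near_mean_sums_close)
  ultimately show ?thesis
    using below above total tails B_nonneg[of a] unfolding abs_le_iff by linarith
qed

lemma excess_sum_le: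
  assumes "0 \<le> r" "r < 1"
  shows "(\<Sum>j\<in>{a<..a+b}. B j * r^(j-a)) \<le> B a / (1 - r)"
proof -
  have "(\<Sum>j\<in>{a<..a+b}. B j * r^(j-a)) \<le> (\<Sum>j\<in>{a<..a+b}. B a * r^(j-a))"
  proof (intro sum_mono mult_right_mono)
    fix j assume "j \<in> {a<..a+b}"
    then show "B j \<le> B a"
      using B_above_mean_le[of "j - a"] by simp
  qed (use assms in simp)
  also have "\<dots> = B a * (\<Sum>i\<in>{1..b}. r^i)"
    unfolding sum_distrib_left[symmetric]
    by (rule arg_cong[where f = "\<lambda>y. B a * y"], rule sum.reindex_bij_witness[of _ "\<lambda>i. a + i" "\<lambda>j. j - a"]) auto
  also have "\<dots> \<le> B a * (\<Sum>i. r^i)"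
    using assms B_nonneg by (intro mult_left_mono sum_le_suminf summable_geometric) auto
  also have "\<dots> = B a / (1 - r)"
    using assms by (simp add: suminf_geometric divide_inverse)
  finally show ?thesis .
qed

(* K = b^(3/5) balances the asymmetry K^3/b^2 against the Chebyshev tail b/K^2. *)
lemma cdf_at_mean_error:
  defines "z \<equiv> real b powr (3/5)"
  shows "\<bar>2 * (\<Sum>j\<le>a. B j) - 1\<bar> \<le> z^3 / real b^2 + z / real b + 4 * real b / z^2 + B a"
proof -
  define K where "K = nat \<lfloor>z\<rfloor>"
  have "1 \<le> real b"
    using b_pos by simp
  then have z: "1 \<le> z" "z \<le> real b"
    unfolding z_def using powr_mono[of "3/5" 1 "real b"] by (auto intro: ge_one_powr_ge_zero)
  moreover have "real K = of_int \<lfloor>z\<rfloor>" "1 \<le> \<lfloor>z\<rfloor>"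
    using z by (simp_all add: K_def)
  moreover have "of_int \<lfloor>z\<rfloor> \<le> z" "z - 1 < of_int \<lfloor>z\<rfloor>"
    by linarith+
  ultimately have K: "real K \<le> z" "z / 2 \<le> real K" "1 \<le> K"
    by linarith+
  then have "K \<le> b"
    using z by linarith
  have "real K * (real K^2 / real b^2 + 1 / real b) = real K^3 / real b^2 + real K / real b"
    by (simp add: field_simps power2_eq_square power3_eq_cube)
  also have "\<dots> \<le> z^3 / real b^2 + z / real b"
    using K by (intro add_mono divide_right_mono power_mono) auto
  finally have near: "real K * (real K^2 / real b^2 + 1 / real b) \<le> z^3 / real b^2 + z / real b" .
  have "real b / real K^2 \<le> real b / (z/2)^2"
    using K z by (intro divide_left_mono power_mono mult_pos_pos) auto
  then have far: "real b / real K^2 \<le> 4 * real b / z^2"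
    by (simp add: power_divide mult.commute)
  show ?thesis
    using cdf_at_mean_bound[OF \<open>1 \<le> K\<close> \<open>K \<le> b\<close>] near far by linarith
qed

end

lemma eventually_binomial_at_mean:
  fixes a b :: "nat \<Rightarrow> nat"
  assumes "\<And>n. b n \<le> a n" "filterlim b at_top sequentially"
  shows "\<forall>\<^sub>F n in sequentially. binomial_at_mean (a n) (b n)"
proof -
  have "\<forall>\<^sub>F n in sequentially. 1 \<le> b n"
    using assms(2) by (simp add: filterlim_at_top)
  then show ?thesis
    by eventually_elim (use assms(1) in \<open>simp add: binomial_at_mean_def\<close>)
qed

lemma binomial_mode_tendsto_0:
  fixes a b :: "nat \<Rightarrow> nat"
  assumes "\<And>n. b n \<le> a n" "filterlim b at_top sequentially"
  shows "(\<lambda>n. Bernstein (a n + b n) (a n) (real (a n) / (real (a n) + real (b n)))) \<longlonglongrightarrow> 0"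
proof -
  have "((\<lambda>x::real. 4 / sqrt x) \<longlongrightarrow> 0) at_top"
    by real_asymp
  then have bound: "(\<lambda>n. 4 / sqrt (real (b n))) \<longlonglongrightarrow> 0"
    using filterlim_compose[OF filterlim_real_sequentially assms(2)] by (rule filterlim_compose)
  have "\<forall>\<^sub>F n in sequentially. 0 \<le> Bernstein (a n + b n) (a n) (real (a n) / (real (a n) + real (b n)))"
    using eventually_binomial_at_mean[OF assms] by eventually_elim (rule binomial_at_mean.B_nonneg)
  moreover have "\<forall>\<^sub>F n in sequentially.
      Bernstein (a n + b n) (a n) (real (a n) / (real (a n) + real (b n))) \<le> 4 / sqrt (real (b n))"
    using eventually_binomial_at_mean[OF assms] by eventually_elim (rule binomial_at_mean.B_at_mean_le)
  ultimately show ?thesis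
    by (rule tendsto_sandwich[OF _ _ tendsto_const bound])
qed

lemma binomial_cdf_at_mean_tendsto_half:
  fixes a b :: "nat \<Rightarrow> nat"
  assumes "\<And>n. b n \<le> a n" "filterlim b at_top sequentially"
  shows "(\<lambda>n. \<Sum>j\<le>a n. Bernstein (a n + b n) j (real (a n) / (real (a n) + real (b n)))) \<longlonglongrightarrow> 1/2"
proof -
  define err where "err x = (x powr (3/5))^3 / x^2 + x powr (3/5) / x + 4 * x / (x powr (3/5))^2" for x :: real
  define F where "F n = (\<Sum>j\<le>a n. Bernstein (a n + b n) j (real (a n) / (real (a n) + real (b n))))" for n
  define M where "M n = Bernstein (a n + b n) (a n) (real (a n) / (real (a n) + real (b n)))" for n
  have "(err \<longlongrightarrow> 0) at_top"
    unfolding err_def by real_asymp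
  then have "(\<lambda>n. err (real (b n))) \<longlonglongrightarrow> 0"
    using filterlim_compose[OF filterlim_real_sequentially assms(2)] by (rule filterlim_compose)
  then have "(\<lambda>n. err (real (b n)) + M n) \<longlonglongrightarrow> 0"
    using binomial_mode_tendsto_0[OF assms] unfolding M_def by (intro tendsto_add_zero)
  moreover have "\<forall>\<^sub>F n in sequentially. norm (2 * F n - 1) \<le> err (real (b n)) + M n"
    using eventually_binomial_at_mean[OF assms]
    by eventually_elim (simp add: F_def M_def err_def binomial_at_mean.cdf_at_mean_error)
  ultimately have "(\<lambda>n. 2 * F n - 1) \<longlonglongrightarrow> 0"
    by (rule Lim_null_comparison[rotated])
  then have "(\<lambda>n. ((2 * F n - 1) + 1) / 2) \<longlonglongrightarrow> (0 + 1) / 2"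
    by (intro tendsto_intros) auto
  then show ?thesis
    by (simp add: F_def)
qed

lemma binomial_excess_tendsto_0:
  fixes a b :: "nat \<Rightarrow> nat"
  assumes "\<And>n. b n \<le> a n" "filterlim b at_top sequentially" "0 \<le> r" "r < 1"
  shows "(\<lambda>n. \<Sum>j\<in>{a n<..a n + b n}. Bernstein (a n + b n) j (real (a n) / (real (a n) + real (b n))) * r^(j - a n))
         \<longlonglongrightarrow> 0"
proof -
  have bound: "(\<lambda>n. Bernstein (a n + b n) (a n) (real (a n) / (real (a n) + real (b n))) / (1 - r)) \<longlonglongrightarrow> 0"
    using tendsto_divide[OF binomial_mode_tendsto_0[OF assms(1,2)] tendsto_const, of "1 - r"] assms by simp
  have "\<forall>\<^sub>F n in sequentially.
      0 \<le> (\<Sum>j\<in>{a n<..a n + b n}. Bernstein (a n + b n) j (real (a n) / (real (a n) + real (b n))) * r^(j - a n))"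
    using eventually_binomial_at_mean[OF assms(1,2)]
    by eventually_elim (use assms(3) in \<open>simp add: sum_nonneg binomial_at_mean.B_nonneg\<close>)
  moreover have "\<forall>\<^sub>F n in sequentially.
      (\<Sum>j\<in>{a n<..a n + b n}. Bernstein (a n + b n) j (real (a n) / (real (a n) + real (b n))) * r^(j - a n))
        \<le> Bernstein (a n + b n) (a n) (real (a n) / (real (a n) + real (b n))) / (1 - r)"
    using eventually_binomial_at_mean[OF assms(1,2)]
    by eventually_elim (rule binomial_at_mean.excess_sum_le[OF _ assms(3,4)])
  ultimately show ?thesis
    by (rule tendsto_sandwich[OF _ _ tendsto_const bound])
qed

lemma scaled_walk_sum_eq:
  fixes k1 k2 t :: nat
  assumes "1/2 < p" "p < 1" "p = real k1 / real (k1 + k2)" "1 \<le> t"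
  shows "(\<Sum>i. real ((t*k1 + t*k2 + 2*i) choose (t*k1 + i)) * p ^ (t*k1 + i) * (1 - p) ^ (t*k2 + i))
       = ((\<Sum>j\<le>t*k1. Bernstein (t*k1 + t*k2) j (real (t*k1) / (real (t*k1) + real (t*k2))))
          + (\<Sum>j\<in>{t*k1<..t*k1 + t*k2}. Bernstein (t*k1 + t*k2) j (real (t*k1) / (real (t*k1) + real (t*k2)))
                                        * (((1-p)/p)^2)^(j - t*k1))) / (2*p-1)"
proof -
  have "real (t*k1) / (real (t*k1) + real (t*k2)) = (real t * real k1) / (real t * (real k1 + real k2))"
    by (simp add: algebra_simps)
  also have "\<dots> = p"
    using assms(3,4) by simp
  finally show ?thesis
    using walk_sum_split[OF assms(1,2), of "t*k1" "t*k2"] by (simp add: power_mult sums_iff)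
qed

theorem corollary3:
  fixes k1 k2 :: nat and p :: real
  assumes "k1 > k2" and "k2 > 0"
    and "p = real k1 / real (k1 + k2)"
  shows "(\<lambda>t::nat. \<Sum>i. real ((t*k1 + t*k2 + 2*i) choose (t*k1 + i))
            * p ^ (t*k1 + i) * (1 - p) ^ (t*k2 + i))
         \<longlonglongrightarrow> (1/4) / (p - 1/2)"
proof -
  have "real k2 < real k1" "0 < real k2"
    using assms by simp_all
  then have p: "1/2 < p" "p < 1"
    unfolding assms(3) by (simp_all add: field_simps)
  then have "0 \<le> (1-p)/p" "(1-p)/p < 1"
    by (auto simp: field_simps)
  then have r: "0 \<le> ((1-p)/p)^2" "((1-p)/p)^2 < 1"
    by (simp_all add: power_less_one_iff)
  have b: "\<And>t. t*k2 \<le> t*k1" "filterlim (\<lambda>t. t*k2) at_top sequentially"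
    using assms by (simp, intro filterlim_subseq) (simp add: strict_mono_def)
  define B where "B t j = Bernstein (t*k1 + t*k2) j (real (t*k1) / (real (t*k1) + real (t*k2)))" for t j
  have "(\<lambda>t. ((\<Sum>j\<le>t*k1. B t j) + (\<Sum>j\<in>{t*k1<..t*k1 + t*k2}. B t j * (((1-p)/p)^2)^(j - t*k1))) / (2*p-1))
        \<longlonglongrightarrow> (1/2 + 0) / (2*p-1)"
    unfolding B_def
    by (intro tendsto_intros binomial_cdf_at_mean_tendsto_half binomial_excess_tendsto_0 b r) (use p in simp)
  moreover have "\<forall>\<^sub>F t in sequentially.
      ((\<Sum>j\<le>t*k1. B t j) + (\<Sum>j\<in>{t*k1<..t*k1 + t*k2}. B t j * (((1-p)/p)^2)^(j - t*k1))) / (2*p-1)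
      = (\<Sum>i. real ((t*k1 + t*k2 + 2*i) choose (t*k1 + i)) * p ^ (t*k1 + i) * (1 - p) ^ (t*k2 + i))"
    using eventually_ge_at_top[of 1] by eventually_elim (simp add: B_def scaled_walk_sum_eq[OF p assms(3)])
  ultimately show ?thesis
    using p by (simp add: Lim_transform_eventually field_simps)
qed

end
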